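(* Assume either (i) $F(x)=0$ for $x<2$, $F$ nondegenerate, and $1-F(x)\le cx^{-(\tau-1)}$ for all $x\ge0$ for some $c>0$, $\tau>3$; or (ii) $F(x)=0$ for $x<2$, $F$ nondegenerate, and $c_1x^{-(\tau-1)}\le1-F(x)\le c_2x^{-(\tau-1)}$ for all $x\ge0$ for some $\tau\in(2,3)$, $0<c_1\le c_2<\infty$. Let $a_n=n^{1/2}$ in case (i) and $a_n=n^{(\tau-2)/(\tau-1)}$ in case (ii), and let $(\underline m_n)$ satisfy $\underline m_n/a_n\to0$. Then $\mathbb{P}(R_{\underline m_n}>\underline m_n)\to0$ as $n\to\infty$.
   Context: Configuration model: $D_1,\dots,D_n$ are i.i.d. with distribution function $F$ (parity fixed by replacing $D_n$ by $D_n+1$ if needed), $L_n=\sum_iD_i$, vertex $i$ has $D_i$ stubs, stubs are paired uniformly at random, each edge gets an independent mean-one exponential weight. Shortest-weight graph (SWG) construction from vertex $1$: one keeps allowed stubs, free stubs (not yet paired) and artificial stubs (a subset of allowed stubs). $\mathrm{SWG}_0$ is vertex $1$; at time $1$ the allowed stubs are the $D_1$ stubs of vertex $1$. For $m\ge2$ (while allowed stubs remain) choose an allowed stub uniformly at random. (1) If it is not artificial, pair it with a uniformly chosen free stub different from itself. (1a) If the paired stub is not allowed, it is incident to a vertex $v$ not yet in the SWG; $v$ is added as a real vertex and the chosen stub is replaced among the allowed stubs by the other $D_v-1$ stubs of $v$; both stubs leave the free stubs. (1b) If the paired stub is allowed, both are removed from allowed and free stubs, a new artificial stub is added to the allowed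 stubs, and an artificial (non-real) vertex is added. (2) If the chosen stub is artificial, it is removed from the allowed stubs. Vertex $1$ is real. $R_m=\min\{j\ge0:\mathrm{SWG}_j\text{ contains } m+1\text{ real vertices}\}$. *)

theory Defs
  imports "HOL-Probability.Probability"
begin

text \<open>Stubs: a real stub is (v, i) with vertex v and index i < D v;
  artificial stubs are labelled by a counter.\<close>
datatype stub = RS "nat \<times> nat" | AS nat

record swg_state =
  allowed :: "stub set"
  free    :: "(nat \<times> nat) set"
  realv   :: "nat set"
  nart    :: nat

definition all_stubs :: "nat \<Rightarrow> (nat \<Rightarrow> nat) \<Rightarrow> (nat \<times> nat) set" where
  "all_stubs n D = {(v, i). v \<in> {1..n} \<and> i < D v}"

definition fix_parity :: "nat \<Rightarrow> (nat \<Rightarrow> nat) \<Rightarrow> (nat \<Rightarrow> nat)" where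
  "fix_parity n D = (if odd (\<Sum>i\<in>{1..n}. D i) then D(n := D n + 1) else D)"

definition degrees :: "nat pmf \<Rightarrow> nat \<Rightarrow> (nat \<Rightarrow> nat) pmf" where
  "degrees p n = map_pmf (fix_parity n) (Pi_pmf {1..n} 0 (\<lambda>_. p))"

definition swg_init :: "nat \<Rightarrow> (nat \<Rightarrow> nat) \<Rightarrow> swg_state" where
  "swg_init n D = \<lparr>allowed = {RS (1, i) | i. i < D 1}, free = all_stubs n D,
                   realv = {1}, nart = 0\<rparr>"

definition swg_step :: "(nat \<Rightarrow> nat) \<Rightarrow> swg_state \<Rightarrow> swg_state pmf" where
  "swg_step D st =
    (if allowed st = {} then return_pmf st else
     pmf_of_set (allowed st) \<bind> (\<lambda>s.
       case s of
         AS a \<Rightarrow> return_pmf (st\<lparr>allowed := allowed st - {s}\<rparr>)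
       | RS x \<Rightarrow>
           (if free st - {x} = {} then return_pmf st else
            pmf_of_set (free st - {x}) \<bind> (\<lambda>y.
              if RS y \<in> allowed st then
                return_pmf (st\<lparr>allowed := (allowed st - {RS x, RS y}) \<union> {AS (nart st)},
                               free := free st - {x, y},
                               nart := Suc (nart st)\<rparr>)
              else
                return_pmf (st\<lparr>allowed := (allowed st - {RS x}) \<union>
                                    {RS (fst y, i) | i. i < D (fst y) \<and> i \<noteq> snd y},
                               free := free st - {x, y},
                               realv := realv st \<union> {fst y}\<rparr>)))))"

primrec swg_path :: "nat \<Rightarrow> (nat \<Rightarrow> nat) \<Rightarrow> nat \<Rightarrow> swg_state list pmf" where
  "swg_path n D 0 = return_pmf [swg_init n D]"
| "swg_path n D (Suc k) =
     swg_path n D k \<bind> (\<lambda>xs. map_pmf (\<lambda>s. xs @ [s]) (swg_step D (last xs)))"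

definition cm_swg :: "nat pmf \<Rightarrow> nat \<Rightarrow> nat \<Rightarrow> swg_state list pmf" where
  "cm_swg p n m = degrees p n \<bind> (\<lambda>D. swg_path n D m)"

text \<open>The event R_m > m, where R_m = min{j. SWG_j contains m+1 real vertices}
  (min of the empty set = infinity).\<close>
definition R_gt :: "nat \<Rightarrow> swg_state list \<Rightarrow> bool" where
  "R_gt m xs \<longleftrightarrow> \<not> (\<exists>j\<le>m. card (realv (xs ! j)) = m + 1)"

definition deg_cdf :: "nat pmf \<Rightarrow> real \<Rightarrow> real" where
  "deg_cdf p x = measure_pmf.prob p {k. real k \<le> x}"

definition nondegenerate :: "(real \<Rightarrow> real) \<Rightarrow> bool" where
  "nondegenerate F \<longleftrightarrow> \<not> (\<exists>a. \<forall>x. F x = (if x < a then 0 else 1))"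

end

theory Submission
  imports Defs
begin

text \<open>Let \<open>E\<^sub>j\<close> be the total degree of the real vertices after \<open>j\<close> steps. While every pairing
  has reached a new vertex, at least \<open>2n - 2j \<ge> n\<close> stubs are still free (all degrees are at
  least 2), so the next pairing hits an allowed stub with probability at most \<open>E\<^sub>j / n\<close>. For a
  truncation level \<open>T\<close>, the potential \<open>min 1 (E\<^sub>j / T)\<close>, set to 1 as soon as this fails,
  therefore grows in expectation by at most \<open>(T + \<Sum>\<^sub>v D\<^sub>v min 1 (D\<^sub>v / T)) / n\<close> per step, while
  \<open>R\<^sub>m > m\<close> forces potential 1 at time \<open>m\<close>. Hence
  \<open>P(R\<^sub>m > m) \<le> E[D\<^sub>1] / T + m (T + n E[D min 1 (D / T)]) / n\<close>. The tail bound gives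
  \<open>E[D min 1 (D / T)] = O(T^-\<beta>)\<close> with \<open>\<beta> = 1\<close> for \<open>\<tau> > 3\<close> and \<open>\<beta> = \<tau> - 2\<close> for \<open>2 < \<tau> < 3\<close>,
  and \<open>T = n / a\<^sub>n\<close> with \<open>a\<^sub>n = n^(\<beta>/(\<beta>+1))\<close> makes the bound \<open>O(a\<^sub>n / n + m\<^sub>n / a\<^sub>n)\<close>.\<close>

lemma nn_integral_pmf_le_const:
  assumes "\<And>x. x \<in> set_pmf M \<Longrightarrow> f x \<le> c"
  shows "(\<integral>\<^sup>+x. f x \<partial>measure_pmf M) \<le> c"
proof -
  have "(\<integral>\<^sup>+x. f x \<partial>measure_pmf M) \<le> (\<integral>\<^sup>+x. c \<partial>measure_pmf M)"
    by (intro nn_integral_mono_AE) (use assms in \<open>auto simp: AE_measure_pmf_iff\<close>)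
  thus ?thesis by simp
qed

lemma nn_integral_pmf_of_set_le_average:
  fixes f :: "'a \<Rightarrow> real"
  assumes fin: "finite F" and nonneg: "\<And>y. y \<in> F \<Longrightarrow> 0 \<le> f y"
    and sum: "(\<Sum>y\<in>F. f y) \<le> real (card F) * c + d" and d: "0 \<le> d"
    and card: "n \<le> card F" and n: "0 < n"
  shows "(\<integral>\<^sup>+y. f y \<partial>measure_pmf (pmf_of_set F)) \<le> ennreal (c + d / n)"
proof -
  have F: "F \<noteq> {}" "0 < card F" using card n fin by auto
  have "(\<Sum>y\<in>F. f y) / card F \<le> (real (card F) * c + d) / card F"
    using sum F by (intro divide_right_mono) auto
  also have "\<dots> = c + d / card F" using F by (simp add: field_simps)
  also have "d / card F \<le> d / n" using card n d by (intro divide_left_mono) auto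
  finally have avg: "(\<Sum>y\<in>F. f y) / card F \<le> c + d / n" by simp
  have "(\<integral>\<^sup>+y. f y \<partial>measure_pmf (pmf_of_set F)) = (\<Sum>y\<in>F. ennreal (f y)) / card F"
    using F fin by (simp add: nn_integral_pmf_of_set)
  also have "\<dots> = ennreal ((\<Sum>y\<in>F. f y) / card F)"
    using nonneg F by (simp add: ennreal_of_nat_eq_real_of_nat divide_ennreal sum_nonneg)
  finally show ?thesis using avg by (simp add: ennreal_leI)
qed

lemma nn_integral_pmf_nat_layer_cake:
  fixes h :: "nat \<Rightarrow> real"
  assumes mono: "\<And>j. h j \<le> h (Suc j)" and h0: "h 0 = 0"
  shows "(\<integral>\<^sup>+d. h d \<partial>measure_pmf p)
       = (\<Sum>j. ennreal (h (Suc j) - h j) * emeasure (measure_pmf p) {d. j < d})"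
proof -
  have "ennreal (h d) = (\<Sum>j. ennreal (h (Suc j) - h j) * indicator {d. j < d} d)" for d
  proof -
    have "(\<Sum>j. ennreal (h (Suc j) - h j) * indicator {d. j < d} d)
        = (\<Sum>j<d. ennreal (h (Suc j) - h j) * indicator {d. j < d} d)"
      by (rule suminf_finite) auto
    also have "\<dots> = ennreal (\<Sum>j<d. h (Suc j) - h j)" using mono by (simp add: sum_nonneg)
    also have "\<dots> = ennreal (h d)" by (simp add: sum_lessThan_telescope h0)
    finally show ?thesis by simp
  qed
  hence "(\<integral>\<^sup>+d. h d \<partial>measure_pmf p)
       = (\<integral>\<^sup>+d. (\<Sum>j. ennreal (h (Suc j) - h j) * indicator {d. j < d} d) \<partial>measure_pmf p)"
    by simp
  also have "\<dots> = (\<Sum>j. ennreal (h (Suc j) - h j) * emeasure (measure_pmf p) {d. j < d})"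
    by (subst nn_integral_suminf) (auto simp: nn_integral_cmult_indicator)
  finally show ?thesis .
qed

text \<open>The increment of \<open>h\<close> at 0 is weighted by the trivial bound 1 on \<open>P(D > 0)\<close>.\<close>
lemma nn_integral_pmf_nat_le_of_increments:
  fixes h f :: "nat \<Rightarrow> real"
  assumes mono: "\<And>j. h j \<le> h (Suc j)" and h0: "h 0 = 0" and h1: "h 1 \<le> B\<^sub>0"
    and incr: "\<And>j. 1 \<le> j \<Longrightarrow> (h (Suc j) - h j) * measure_pmf.prob p {d. j < d} \<le> f j"
    and sums: "\<And>K. (\<Sum>j=1..K. f j) \<le> B\<^sub>1"
  shows "(\<integral>\<^sup>+d. h d \<partial>measure_pmf p) \<le> ennreal (B\<^sub>0 + B\<^sub>1)"
proof -
  define v where "v j = (if j = 0 then h 1 else f j)" for j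
  have incr_v: "(h (Suc j) - h j) * measure_pmf.prob p {d. j < d} \<le> v j" for j
  proof (cases "j = 0")
    case True
    have "(h 1 - h 0) * measure_pmf.prob p {d. 0 < d} \<le> (h 1 - h 0) * 1"
      using mono[of 0] by (intro mult_left_mono) auto
    thus ?thesis using True h0 by (simp add: v_def)
  qed (use incr in \<open>auto simp: v_def\<close>)
  have v_nonneg: "0 \<le> v j" for j
    using incr_v[of j] mono[of j] by (smt (verit) measure_nonneg mult_nonneg_nonneg)
  have "(\<integral>\<^sup>+d. h d \<partial>measure_pmf p)
      = (\<Sum>j. ennreal (h (Suc j) - h j) * emeasure (measure_pmf p) {d. j < d})"
    by (rule nn_integral_pmf_nat_layer_cake[OF mono h0])
  also have "\<dots> \<le> (\<Sum>j. ennreal (v j))"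
  proof (intro suminf_le summableI)
    fix j
    show "ennreal (h (Suc j) - h j) * emeasure (measure_pmf p) {d. j < d} \<le> ennreal (v j)"
      using mono[of j] incr_v[of j]
      by (simp add: measure_pmf.emeasure_eq_measure ennreal_mult[symmetric] ennreal_leI)
  qed
  also have "\<dots> \<le> ennreal (B\<^sub>0 + B\<^sub>1)"
  proof (intro suminf_le_const summableI)
    fix K
    have "(\<Sum>j<K. v j) \<le> (\<Sum>j<Suc K. v j)" using v_nonneg by (simp add: sum_nonneg)
    also have "\<dots> = h 1 + (\<Sum>j=1..K. f j)"
      by (simp add: v_def sum.atLeast1_atMost_eq lessThan_Suc_eq_insert_0 sum.reindex)
    also have "\<dots> \<le> B\<^sub>0 + B\<^sub>1" using h1 sums by (intro add_mono)
    finally show "(\<Sum>j<K. ennreal (v j)) \<le> ennreal (B\<^sub>0 + B\<^sub>1)"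
      using v_nonneg by (simp add: ennreal_leI)
  qed
  finally show ?thesis .
qed

section \<open>Sums of powers\<close>

lemma powr_Suc_diff_eq_mvt:
  fixes x e :: real
  assumes "1 \<le> x"
  obtains z where "x < z" "z < x + 1" "(x + 1) powr e - x powr e = e * z powr (e - 1)"
proof -
  have "\<exists>z. x < z \<and> z < x + 1 \<and> (x + 1) powr e - x powr e = ((x + 1) - x) * (e * z powr (e - 1))"
    by (rule MVT2) (use assms in \<open>auto intro!: has_real_derivative_powr\<close>)
  thus ?thesis using that by auto
qed

lemma powr_Suc_diff_ge:
  fixes x e :: real
  assumes x: "1 \<le> x" and e: "0 < e" "e < 1"
  shows "e * (x + 1) powr (e - 1) \<le> (x + 1) powr e - x powr e"
proof -
  obtain z where z: "x < z" "z < x + 1" "(x + 1) powr e - x powr e = e * z powr (e - 1)"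
    using powr_Suc_diff_eq_mvt[OF x] .
  have "(x + 1) powr (e - 1) \<le> z powr (e - 1)" by (rule powr_mono2') (use z x e in auto)
  thus ?thesis using z e by (simp add: mult_left_mono)
qed

lemma powr_neg_diff_Suc_ge:
  fixes x b :: real
  assumes x: "1 \<le> x" and b: "0 < b"
  shows "b * (x + 1) powr (- b - 1) \<le> x powr (- b) - (x + 1) powr (- b)"
proof -
  obtain z where z: "x < z" "z < x + 1" "(x + 1) powr (- b) - x powr (- b) = - b * z powr (- b - 1)"
    using powr_Suc_diff_eq_mvt[OF x] .
  have "(x + 1) powr (- b - 1) \<le> z powr (- b - 1)" by (rule powr_mono2') (use z x b in auto)
  hence "b * (x + 1) powr (- b - 1) \<le> b * z powr (- b - 1)" using b by (simp add: mult_left_mono)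
  thus ?thesis using z(3) by linarith
qed

lemma sum_powr_le:
  assumes a: "0 < a" "a < 1"
  shows "(\<Sum>j=1..N. real j powr (a - 1)) \<le> 1 + real N powr a / a"
proof (induction N)
  case (Suc N)
  show ?case
  proof (cases "N = 0")
    case False
    have "a * (real N + 1) powr (a - 1) \<le> (real N + 1) powr a - real N powr a"
      by (rule powr_Suc_diff_ge) (use False a in auto)
    hence "real (Suc N) powr (a - 1) \<le> ((real N + 1) powr a - real N powr a) / a"
      using a by (simp add: field_simps add.commute)
    hence "(\<Sum>j=1..Suc N. real j powr (a - 1))
        \<le> 1 + real N powr a / a + ((real N + 1) powr a - real N powr a) / a"
      using Suc.IH by simp
    also have "\<dots> = 1 + real (Suc N) powr a / a" using a by (simp add: field_simps add.commute)
    finally show ?thesis .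
  qed (use a in simp)
qed (use a in simp)

lemma sum_powr_tail_le:
  assumes b: "0 < b" and N: "1 \<le> N"
  shows "(\<Sum>j\<in>{N<..M}. real j powr (- b - 1)) \<le> real N powr (- b) / b"
proof -
  have "(\<Sum>j\<in>{N<..M}. real j powr (- b - 1)) \<le> real N powr (- b) / b - real (max N M) powr (- b) / b"
  proof (induction M)
    case (Suc M)
    show ?case
    proof (cases "N \<le> M")
      case True
      have "b * (real M + 1) powr (- b - 1) \<le> real M powr (- b) - (real M + 1) powr (- b)"
        by (rule powr_neg_diff_Suc_ge) (use True N b in auto)
      hence "real (Suc M) powr (- b - 1) \<le> (real M powr (- b) - (real M + 1) powr (- b)) / b"
        using b by (simp add: field_simps add.commute)
      moreover have "{N<..Suc M} = insert (Suc M) {N<..M}" using True by auto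
      ultimately have "(\<Sum>j\<in>{N<..Suc M}. real j powr (- b - 1))
          \<le> real N powr (- b) / b - real M powr (- b) / b + (real M powr (- b) - (real M + 1) powr (- b)) / b"
        using Suc.IH True by (simp add: max_def)
      also have "\<dots> = real N powr (- b) / b - real (max N (Suc M)) powr (- b) / b"
        using b True by (simp add: field_simps add.commute max_def)
      finally show ?thesis .
    next
      case False
      thus ?thesis by (cases "N = Suc M") (auto simp: max_def)
    qed
  qed (use N in \<open>simp add: max_def\<close>)
  thus ?thesis using b by (smt (verit) divide_nonneg_nonneg powr_ge_zero)
qed

lemma sum_powr_neg_le:
  assumes b: "0 < b"
  shows "(\<Sum>j=1..K. real j powr (- b - 1)) \<le> 1 + 1 / b"
proof (cases "K = 0")
  case False
  hence "{1..K} = insert 1 {1<..K}" by auto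
  hence "(\<Sum>j=1..K. real j powr (- b - 1)) = 1 + (\<Sum>j\<in>{1<..K}. real j powr (- b - 1))" by simp
  also have "\<dots> \<le> 1 + real 1 powr (- b) / b" using sum_powr_tail_le[OF b, of 1 K] by simp
  finally show ?thesis by simp
qed (use b in simp)

section \<open>The exploration invariant\<close>

lemma all_stubs_Sigma: "all_stubs n D = Sigma {1..n} (\<lambda>v. {..<D v})"
  unfolding all_stubs_def by auto

lemma finite_all_stubs: "finite (all_stubs n D)"
  unfolding all_stubs_Sigma by auto

lemma card_all_stubs: "card (all_stubs n D) = (\<Sum>v\<in>{1..n}. D v)"
  unfolding all_stubs_Sigma by (simp add: card_SigmaI)

definition real_deg_sum :: "(nat \<Rightarrow> nat) \<Rightarrow> swg_state \<Rightarrow> real" where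
  "real_deg_sum D s = (\<Sum>v\<in>realv s. real (D v))"

text \<open>The state after \<open>j\<close> steps each of which added a real vertex: the allowed stubs are exactly
  the free stubs of real vertices, and at least \<open>2(n - j)\<close> stubs are still free.\<close>
definition swg_inv :: "nat \<Rightarrow> (nat \<Rightarrow> nat) \<Rightarrow> nat \<Rightarrow> swg_state \<Rightarrow> bool" where
  "swg_inv n D j s \<longleftrightarrow> finite (realv s) \<and> card (realv s) = Suc j \<and> realv s \<subseteq> {1..n}
     \<and> free s \<subseteq> all_stubs n D \<and> 2 * n \<le> card (free s) + 2 * j
     \<and> allowed s \<subseteq> RS ` {z \<in> free s. fst z \<in> realv s} \<and> allowed s \<noteq> {}
     \<and> (\<forall>z\<in>free s. RS z \<notin> allowed s \<longrightarrow> fst z \<notin> realv s)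
     \<and> (\<forall>z\<in>all_stubs n D. fst z \<notin> realv s \<longrightarrow> z \<in> free s)"

definition swg_attach :: "(nat \<Rightarrow> nat) \<Rightarrow> swg_state \<Rightarrow> nat \<times> nat \<Rightarrow> nat \<times> nat \<Rightarrow> swg_state" where
  "swg_attach D s x y = s\<lparr>allowed := (allowed s - {RS x}) \<union> {RS (fst y, i) | i. i < D (fst y) \<and> i \<noteq> snd y},
     free := free s - {x, y}, realv := realv s \<union> {fst y}\<rparr>"

definition swg_collide :: "swg_state \<Rightarrow> nat \<times> nat \<Rightarrow> nat \<times> nat \<Rightarrow> swg_state" where
  "swg_collide s x y = s\<lparr>allowed := (allowed s - {RS x, RS y}) \<union> {AS (nart s)},
     free := free s - {x, y}, nart := Suc (nart s)\<rparr>"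

definition swg_pair :: "(nat \<Rightarrow> nat) \<Rightarrow> swg_state \<Rightarrow> nat \<times> nat \<Rightarrow> nat \<times> nat \<Rightarrow> swg_state" where
  "swg_pair D s x y = (if RS y \<in> allowed s then swg_collide s x y else swg_attach D s x y)"

lemma swg_step_eq:
  "swg_step D s =
    (if allowed s = {} then return_pmf s else
     pmf_of_set (allowed s) \<bind> (\<lambda>a. case a of
         AS b \<Rightarrow> return_pmf (s\<lparr>allowed := allowed s - {a}\<rparr>)
       | RS x \<Rightarrow> if free s - {x} = {} then return_pmf s else
           map_pmf (swg_pair D s x) (pmf_of_set (free s - {x}))))"
  unfolding swg_step_def swg_pair_def swg_collide_def swg_attach_def map_pmf_def
  by (intro if_cong refl bind_pmf_cong stub.case_cong) (simp_all add: if_distrib[of return_pmf])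

lemma swg_inv_init:
  assumes D2: "\<forall>v\<in>{1..n}. 2 \<le> D v" and n: "1 \<le> n"
  shows "swg_inv n D 0 (swg_init n D)"
proof -
  have "2 * n = (\<Sum>v\<in>{1..n}. 2::nat)" by simp
  also have "\<dots> \<le> card (all_stubs n D)" unfolding card_all_stubs by (rule sum_mono) (use D2 in auto)
  finally have free: "2 * n \<le> card (all_stubs n D)" .
  have "2 \<le> D 1" using D2 n by auto
  thus ?thesis using n free unfolding swg_inv_def swg_init_def
    by (auto simp: all_stubs_def intro!: exI[of _ 0])
qed

lemma finite_free_if_swg_inv: "swg_inv n D j s \<Longrightarrow> finite (free s)"
  unfolding swg_inv_def using finite_all_stubs finite_subset by blast

lemma finite_allowed_if_swg_inv:
  assumes "swg_inv n D j s"
  shows "finite (allowed s)"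
proof -
  have "allowed s \<subseteq> RS ` free s" using assms unfolding swg_inv_def by auto
  thus ?thesis using finite_free_if_swg_inv[OF assms] by (meson finite_imageI finite_subset)
qed

lemma fst_notin_realv_if_not_allowed:
  "swg_inv n D j s \<Longrightarrow> y \<in> free s \<Longrightarrow> RS y \<notin> allowed s \<Longrightarrow> fst y \<notin> realv s"
  unfolding swg_inv_def by auto

lemma real_deg_sum_swg_attach:
  assumes "finite (realv s)" "fst y \<notin> realv s"
  shows "real_deg_sum D (swg_attach D s x y) = real_deg_sum D s + D (fst y)"
  unfolding real_deg_sum_def swg_attach_def using assms by simp

lemma allowed_swg_attach:
  assumes inv: "swg_inv n D j s" and x: "RS x \<in> allowed s"
    and y: "y \<in> free s - {x}" and y_new: "RS y \<notin> allowed s"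
  defines "s' \<equiv> swg_attach D s x y"
  shows "allowed s' \<subseteq> RS ` {z \<in> free s'. fst z \<in> realv s'}"
    and "\<forall>z\<in>free s'. RS z \<notin> allowed s' \<longrightarrow> fst z \<notin> realv s'"
proof -
  have x_real: "fst x \<in> realv s" using inv x unfolding swg_inv_def by auto
  have y_not_real: "fst y \<notin> realv s" using fst_notin_realv_if_not_allowed[OF inv _ y_new] y by simp
  have "y \<in> all_stubs n D" using inv y unfolding swg_inv_def by auto
  hence y_stub: "fst y \<in> {1..n}" unfolding all_stubs_def by auto
  show "allowed s' \<subseteq> RS ` {z \<in> free s'. fst z \<in> realv s'}"
  proof
    fix a assume "a \<in> allowed s'"
    then consider "a \<in> allowed s - {RS x}" | i where "a = RS (fst y, i)" "i < D (fst y)" "i \<noteq> snd y"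
      unfolding s'_def swg_attach_def by auto
    thus "a \<in> RS ` {z \<in> free s'. fst z \<in> realv s'}"
    proof cases
      case 1
      then obtain z where "a = RS z" "z \<in> free s" "fst z \<in> realv s"
        using inv unfolding swg_inv_def by blast
      thus ?thesis using 1 y_not_real unfolding s'_def swg_attach_def by auto
    next
      case (2 i)
      have "(fst y, i) \<in> all_stubs n D" using 2 y_stub unfolding all_stubs_def by auto
      hence "(fst y, i) \<in> free s" using inv y_not_real unfolding swg_inv_def by auto
      moreover have "(fst y, i) \<noteq> x" "(fst y, i) \<noteq> y" using x_real y_not_real 2 by (auto simp: prod_eq_iff)
      ultimately show ?thesis using 2 unfolding s'_def swg_attach_def by auto
    qed
  qed
  show "\<forall>z\<in>free s'. RS z \<notin> allowed s' \<longrightarrow> fst z \<notin> realv s'"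
  proof (intro ballI impI)
    fix z assume z: "z \<in> free s'" and not_allowed: "RS z \<notin> allowed s'"
    have "z \<in> all_stubs n D" using z inv unfolding s'_def swg_attach_def swg_inv_def by auto
    hence "fst z \<noteq> fst y"
      using z not_allowed unfolding s'_def swg_attach_def all_stubs_def by (cases z, cases y) auto
    moreover have "RS z \<notin> allowed s" using not_allowed z unfolding s'_def swg_attach_def by auto
    ultimately show "fst z \<notin> realv s'" using z inv unfolding s'_def swg_attach_def swg_inv_def by auto
  qed
qed

lemma swg_inv_attach:
  assumes inv: "swg_inv n D j s" and D2: "\<forall>v\<in>{1..n}. 2 \<le> D v"
    and x: "RS x \<in> allowed s" and y: "y \<in> free s - {x}" and y_new: "RS y \<notin> allowed s"
  shows "swg_inv n D (Suc j) (swg_attach D s x y)"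
proof -
  have x_free: "x \<in> free s" "fst x \<in> realv s" using inv x unfolding swg_inv_def by auto
  have y_not_real: "fst y \<notin> realv s" using fst_notin_realv_if_not_allowed[OF inv _ y_new] y by simp
  have "y \<in> all_stubs n D" using inv y unfolding swg_inv_def by auto
  hence y_stub: "fst y \<in> {1..n}" "snd y < D (fst y)" unfolding all_stubs_def by auto
  have card_free: "card (free s - {x, y}) + 2 = card (free s)"
  proof -
    have "{x, y} \<subseteq> free s" using x_free y by auto
    hence "card {x, y} \<le> card (free s)" "card (free s - {x, y}) = card (free s) - card {x, y}"
      using finite_free_if_swg_inv[OF inv] by (auto intro: card_mono simp: card_Diff_subset)
    moreover have "y \<noteq> x" using y by simp
    ultimately show ?thesis by simp
  qed
  have sibling: "\<exists>i. i < D (fst y) \<and> i \<noteq> snd y"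
  proof -
    have "2 \<le> D (fst y)" using D2 y_stub by auto
    thus ?thesis by (cases "snd y = 0") (auto intro: exI[of _ 1] exI[of _ 0])
  qed
  have fin: "finite (realv s)" using inv unfolding swg_inv_def by simp
  have upd: "free (swg_attach D s x y) = free s - {x, y}"
    "realv (swg_attach D s x y) = insert (fst y) (realv s)"
    unfolding swg_attach_def by auto
  show ?thesis
    unfolding swg_inv_def upd
  proof (intro conjI)
    show "finite (insert (fst y) (realv s))" using fin by simp
    show "card (insert (fst y) (realv s)) = Suc (Suc j)"
      using fin y_not_real inv unfolding swg_inv_def by simp
    show "insert (fst y) (realv s) \<subseteq> {1..n}" using y_stub inv unfolding swg_inv_def by auto
    show "free s - {x, y} \<subseteq> all_stubs n D" using inv unfolding swg_inv_def by auto
    show "2 * n \<le> card (free s - {x, y}) + 2 * Suc j" using inv card_free unfolding swg_inv_def by simp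
    show "allowed (swg_attach D s x y) \<noteq> {}" using sibling unfolding swg_attach_def by auto
    show "\<forall>z\<in>all_stubs n D. fst z \<notin> insert (fst y) (realv s) \<longrightarrow> z \<in> free s - {x, y}"
      using inv x_free unfolding swg_inv_def by auto
  qed (use allowed_swg_attach[OF inv x y y_new] in \<open>simp_all add: upd\<close>)
qed

lemma card_allowed_le_real_deg_sum:
  assumes inv: "swg_inv n D j s"
  shows "real (card (allowed s)) \<le> real_deg_sum D s"
proof -
  have fin: "finite (realv s)" using inv unfolding swg_inv_def by auto
  have "allowed s \<subseteq> RS ` Sigma (realv s) (\<lambda>v. {..<D v})"
  proof
    fix a assume "a \<in> allowed s"
    then obtain z where z: "a = RS z" "z \<in> free s" "fst z \<in> realv s"
      using inv unfolding swg_inv_def by blast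
    hence "z \<in> all_stubs n D" using inv unfolding swg_inv_def by blast
    thus "a \<in> RS ` Sigma (realv s) (\<lambda>v. {..<D v})" using z by (cases z) (auto simp: all_stubs_def)
  qed
  hence "card (allowed s) \<le> card (RS ` Sigma (realv s) (\<lambda>v. {..<D v}))"
    using fin by (intro card_mono) auto
  also have "\<dots> \<le> card (Sigma (realv s) (\<lambda>v. {..<D v}))" by (rule card_image_le) (use fin in auto)
  also have "\<dots> = (\<Sum>v\<in>realv s. D v)" using fin by (simp add: card_SigmaI)
  finally show ?thesis unfolding real_deg_sum_def by (metis of_nat_le_iff of_nat_sum)
qed

lemma R_gt_imp_not_swg_inv:
  assumes "xs \<in> set_pmf (swg_path n D m)" "R_gt m xs"
  shows "\<not> swg_inv n D m (last xs)"
proof -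
  have "length xs = Suc m" using assms(1) by (induction m arbitrary: xs) auto
  hence "xs ! m = last xs" by (metis diff_Suc_1 last_conv_nth list.size(3) nat.simps(3))
  thus ?thesis using assms(2) unfolding R_gt_def swg_inv_def by auto
qed

section \<open>The potential argument for fixed degrees\<close>

definition trunc_sq :: "real \<Rightarrow> nat \<Rightarrow> real" where
  "trunc_sq T d = real d * min 1 (real d / T)"

definition swg_potential :: "nat \<Rightarrow> (nat \<Rightarrow> nat) \<Rightarrow> real \<Rightarrow> nat \<Rightarrow> swg_state \<Rightarrow> real" where
  "swg_potential n D T j s = (if swg_inv n D j s then min 1 (real_deg_sum D s / T) else 1)"

lemma real_deg_sum_nonneg: "0 \<le> real_deg_sum D s"
  unfolding real_deg_sum_def by (simp add: sum_nonneg)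

lemma swg_potential_le_1: "swg_potential n D T j s \<le> 1"
  unfolding swg_potential_def by auto

lemma swg_potential_nonneg: "0 < T \<Longrightarrow> 0 \<le> swg_potential n D T j s"
  unfolding swg_potential_def using real_deg_sum_nonneg[of D s] by auto

lemma trunc_sq_nonneg: "0 < T \<Longrightarrow> 0 \<le> trunc_sq T d"
  unfolding trunc_sq_def by simp

lemma sum_min_deg_le_sum_trunc_sq:
  assumes "F \<subseteq> all_stubs n D" and T: "0 < T"
  shows "(\<Sum>y\<in>F. min 1 (real (D (fst y)) / T)) \<le> (\<Sum>v\<in>{1..n}. trunc_sq T (D v))"
proof -
  have "(\<Sum>y\<in>F. min 1 (real (D (fst y)) / T)) \<le> (\<Sum>y\<in>all_stubs n D. min 1 (real (D (fst y)) / T))"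
    by (intro sum_mono2 finite_all_stubs) (use assms in auto)
  also have "\<dots> = (\<Sum>v\<in>{1..n}. \<Sum>i\<in>{..<D v}. min 1 (real (D v) / T))"
    unfolding all_stubs_Sigma by (subst sum.Sigma) (auto simp: case_prod_unfold)
  also have "\<dots> = (\<Sum>v\<in>{1..n}. trunc_sq T (D v))" unfolding trunc_sq_def by (simp add: mult.commute)
  finally show ?thesis .
qed

lemma card_free_minus_ge:
  assumes inv: "swg_inv n D j s" and j: "2 * j + 1 \<le> n" and x: "x \<in> free s"
  shows "n \<le> card (free s - {x})"
proof -
  have "card (free s - {x}) = card (free s) - 1"
    using x finite_free_if_swg_inv[OF inv] by (simp add: card_Diff_singleton)
  moreover have "2 * n \<le> card (free s) + 2 * j" using inv unfolding swg_inv_def by simp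
  ultimately show ?thesis using j by linarith
qed

lemma swg_potential_pair_le:
  assumes inv: "swg_inv n D j s" and D2: "\<forall>v\<in>{1..n}. 2 \<le> D v" and T: "0 < T"
    and x: "RS x \<in> allowed s" and y: "y \<in> free s - {x}"
  shows "swg_potential n D T (Suc j) (swg_pair D s x y)
       \<le> swg_potential n D T j s + (if RS y \<in> allowed s then 1 else 0) + min 1 (real (D (fst y)) / T)"
proof (cases "RS y \<in> allowed s")
  case True
  have "0 \<le> min 1 (real (D (fst y)) / T)" using T by simp
  thus ?thesis
    using True swg_potential_le_1[of n D T "Suc j" "swg_pair D s x y"] swg_potential_nonneg[OF T, of n D j s]
    by simp
next
  case False
  have "finite (realv s)" using inv unfolding swg_inv_def by simp
  moreover have "fst y \<notin> realv s" using fst_notin_realv_if_not_allowed[OF inv _ False] y by simp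
  ultimately have "real_deg_sum D (swg_attach D s x y) = real_deg_sum D s + D (fst y)"
    by (rule real_deg_sum_swg_attach)
  hence "swg_potential n D T (Suc j) (swg_pair D s x y) = min 1 ((real_deg_sum D s + D (fst y)) / T)"
    using swg_inv_attach[OF inv D2 x y False] False unfolding swg_potential_def swg_pair_def by simp
  also have "\<dots> \<le> min 1 (real_deg_sum D s / T) + min 1 (real (D (fst y)) / T)"
  proof -
    define u v where "u = real_deg_sum D s / T" and "v = real (D (fst y)) / T"
    have "0 \<le> u" "0 \<le> v" unfolding u_def v_def using T real_deg_sum_nonneg[of D s] by auto
    hence "min 1 (u + v) \<le> min 1 u + min 1 v" by (auto simp: min_def)
    thus ?thesis unfolding u_def v_def add_divide_distrib .
  qed
  also have "min 1 (real_deg_sum D s / T) = swg_potential n D T j s"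
    using inv unfolding swg_potential_def by simp
  finally show ?thesis using False by simp
qed

lemma nn_integral_swg_pair_potential_le:
  assumes inv: "swg_inv n D j s" and D2: "\<forall>v\<in>{1..n}. 2 \<le> D v" and T: "0 < T"
    and j: "2 * j + 1 \<le> n" and small: "real_deg_sum D s < T" and x: "RS x \<in> allowed s"
  shows "(\<integral>\<^sup>+t. swg_potential n D T (Suc j) t \<partial>map_pmf (swg_pair D s x) (pmf_of_set (free s - {x})))
       \<le> ennreal (swg_potential n D T j s + (T + (\<Sum>v\<in>{1..n}. trunc_sq T (D v))) / n)"
proof -
  define F where "F = free s - {x}"
  define Q where "Q = (\<Sum>v\<in>{1..n}. trunc_sq T (D v))"
  have x_free: "x \<in> free s" using inv x unfolding swg_inv_def by auto
  have fin: "finite F" unfolding F_def using finite_free_if_swg_inv[OF inv] by simp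
  have collisions: "(\<Sum>y\<in>F. if RS y \<in> allowed s then 1 else 0::real) \<le> T"
  proof -
    have "card {y \<in> F. RS y \<in> allowed s} = card (RS ` {y \<in> F. RS y \<in> allowed s})"
      by (rule card_image[symmetric]) (auto simp: inj_on_def)
    also have "\<dots> \<le> card (allowed s)" by (rule card_mono[OF finite_allowed_if_swg_inv[OF inv]]) auto
    finally have "real (card {y \<in> F. RS y \<in> allowed s}) \<le> real_deg_sum D s"
      using card_allowed_le_real_deg_sum[OF inv] by linarith
    thus ?thesis using fin small by (simp add: sum.If_cases Int_def)
  qed
  have new_vertices: "(\<Sum>y\<in>F. min 1 (real (D (fst y)) / T)) \<le> Q"
    unfolding Q_def using inv T
    by (intro sum_min_deg_le_sum_trunc_sq) (auto simp: F_def swg_inv_def)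
  have "(\<Sum>y\<in>F. swg_potential n D T (Suc j) (swg_pair D s x y))
      \<le> (\<Sum>y\<in>F. swg_potential n D T j s + (if RS y \<in> allowed s then 1 else 0) + min 1 (real (D (fst y)) / T))"
    by (intro sum_mono swg_potential_pair_le[OF inv D2 T x]) (simp add: F_def)
  also have "\<dots> \<le> real (card F) * swg_potential n D T j s + (T + Q)"
    using collisions new_vertices by (simp add: sum.distrib)
  finally have "(\<Sum>y\<in>F. swg_potential n D T (Suc j) (swg_pair D s x y))
      \<le> real (card F) * swg_potential n D T j s + (T + Q)" .
  hence "(\<integral>\<^sup>+y. swg_potential n D T (Suc j) (swg_pair D s x y) \<partial>measure_pmf (pmf_of_set F))
      \<le> ennreal (swg_potential n D T j s + (T + Q) / n)"
    using fin T card_free_minus_ge[OF inv j x_free] j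
    by (intro nn_integral_pmf_of_set_le_average)
       (auto simp: F_def Q_def swg_potential_nonneg sum_nonneg trunc_sq_nonneg)
  thus ?thesis unfolding F_def Q_def by simp
qed

lemma swg_step_potential_le:
  assumes D2: "\<forall>v\<in>{1..n}. 2 \<le> D v" and T: "0 < T" and j: "2 * j + 1 \<le> n"
  shows "(\<integral>\<^sup>+t. swg_potential n D T (Suc j) t \<partial>swg_step D s)
       \<le> ennreal (swg_potential n D T j s + (T + (\<Sum>v\<in>{1..n}. trunc_sq T (D v))) / n)"
    (is "_ \<le> ennreal (_ + ?\<delta>)")
proof (cases "swg_inv n D j s \<and> real_deg_sum D s < T")
  case False
  hence "swg_potential n D T j s = 1"
    unfolding swg_potential_def using T by (auto simp: min_def le_divide_eq_1)
  moreover have "0 \<le> ?\<delta>" using T by (simp add: sum_nonneg trunc_sq_nonneg)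
  ultimately have "1 \<le> ennreal (swg_potential n D T j s + ?\<delta>)" by simp
  moreover have "(\<integral>\<^sup>+t. swg_potential n D T (Suc j) t \<partial>swg_step D s) \<le> 1"
    by (intro nn_integral_pmf_le_const) (simp add: swg_potential_le_1)
  ultimately show ?thesis by (meson order_trans)
next
  case True
  hence inv: "swg_inv n D j s" and small: "real_deg_sum D s < T" by auto
  have ne: "allowed s \<noteq> {}" using inv unfolding swg_inv_def by auto
  have pairs: "(\<integral>\<^sup>+t. swg_potential n D T (Suc j) t \<partial>measure_pmf (case a of
         AS b \<Rightarrow> return_pmf (s\<lparr>allowed := allowed s - {a}\<rparr>)
       | RS x \<Rightarrow> if free s - {x} = {} then return_pmf s else
           map_pmf (swg_pair D s x) (pmf_of_set (free s - {x}))))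
       \<le> ennreal (swg_potential n D T j s + ?\<delta>)" if "a \<in> set_pmf (pmf_of_set (allowed s))" for a
  proof -
    have "a \<in> allowed s" using that ne finite_allowed_if_swg_inv[OF inv] by simp
    then obtain x where x: "a = RS x" "RS x \<in> allowed s" "x \<in> free s"
      using inv unfolding swg_inv_def by blast
    have "0 < card (free s - {x})" using card_free_minus_ge[OF inv j x(3)] j by linarith
    hence "free s - {x} \<noteq> {}" by (metis card.empty less_irrefl)
    thus ?thesis using nn_integral_swg_pair_potential_le[OF inv D2 T j small x(2)] x(1) by simp
  qed
  show ?thesis
    unfolding swg_step_eq using ne
    by (simp only: if_False nn_integral_bind_pmf) (rule nn_integral_pmf_le_const[OF pairs])
qed

lemma swg_path_potential_le:
  assumes D2: "\<forall>v\<in>{1..n}. 2 \<le> D v" and T: "0 < T" and k: "2 * k \<le> n"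
  shows "(\<integral>\<^sup>+xs. swg_potential n D T k (last xs) \<partial>swg_path n D k)
       \<le> ennreal (swg_potential n D T 0 (swg_init n D) + real k * ((T + (\<Sum>v\<in>{1..n}. trunc_sq T (D v))) / n))"
  using k
proof (induction k)
  case 0
  show ?case using swg_potential_nonneg[OF T] by simp
next
  case (Suc k)
  define \<delta> where "\<delta> = (T + (\<Sum>v\<in>{1..n}. trunc_sq T (D v))) / n"
  have \<delta>: "0 \<le> \<delta>" unfolding \<delta>_def using T by (simp add: sum_nonneg trunc_sq_nonneg)
  have "(\<integral>\<^sup>+xs. swg_potential n D T (Suc k) (last xs) \<partial>swg_path n D (Suc k))
      = (\<integral>\<^sup>+xs. (\<integral>\<^sup>+s. swg_potential n D T (Suc k) s \<partial>swg_step D (last xs)) \<partial>swg_path n D k)"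
    by simp
  also have "\<dots> \<le> (\<integral>\<^sup>+xs. ennreal (swg_potential n D T k (last xs)) + ennreal \<delta> \<partial>swg_path n D k)"
  proof (rule nn_integral_mono)
    fix xs
    have "(\<integral>\<^sup>+s. swg_potential n D T (Suc k) s \<partial>swg_step D (last xs))
        \<le> ennreal (swg_potential n D T k (last xs) + \<delta>)"
      unfolding \<delta>_def by (rule swg_step_potential_le[OF D2 T]) (use Suc.prems in simp)
    thus "(\<integral>\<^sup>+s. swg_potential n D T (Suc k) s \<partial>swg_step D (last xs))
        \<le> ennreal (swg_potential n D T k (last xs)) + ennreal \<delta>"
      using swg_potential_nonneg[OF T] \<delta> by (simp add: ennreal_plus)
  qed
  also have "\<dots> = (\<integral>\<^sup>+xs. swg_potential n D T k (last xs) \<partial>swg_path n D k) + ennreal \<delta>"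
    by (subst nn_integral_add) auto
  also have "\<dots> \<le> ennreal (swg_potential n D T 0 (swg_init n D) + real k * \<delta>) + ennreal \<delta>"
    using Suc unfolding \<delta>_def by (intro add_right_mono) simp
  also have "\<dots> = ennreal (swg_potential n D T 0 (swg_init n D) + real (Suc k) * \<delta>)"
    using swg_potential_nonneg[OF T] \<delta>
    by (simp add: ennreal_plus[symmetric] algebra_simps del: ennreal_plus)
  finally show ?case unfolding \<delta>_def .
qed

lemma prob_R_gt_swg_path_le:
  assumes D2: "\<forall>v\<in>{1..n}. 2 \<le> D v" and T: "0 < T" and m: "2 * m \<le> n" and n: "1 \<le> n"
  shows "emeasure (swg_path n D m) {xs. R_gt m xs}
       \<le> ennreal (real (D 1) / T + real m * ((T + (\<Sum>v\<in>{1..n}. trunc_sq T (D v))) / n))"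
proof -
  have "emeasure (swg_path n D m) {xs. R_gt m xs} = (\<integral>\<^sup>+xs. indicator {xs. R_gt m xs} xs \<partial>swg_path n D m)"
    by simp
  also have "\<dots> \<le> (\<integral>\<^sup>+xs. swg_potential n D T m (last xs) \<partial>swg_path n D m)"
    by (intro nn_integral_mono_AE)
       (auto simp: AE_measure_pmf_iff swg_potential_def dest: R_gt_imp_not_swg_inv split: split_indicator)
  also have "\<dots> \<le> ennreal (swg_potential n D T 0 (swg_init n D)
      + real m * ((T + (\<Sum>v\<in>{1..n}. trunc_sq T (D v))) / n))"
    by (rule swg_path_potential_le[OF D2 T m])
  also have "\<dots> \<le> ennreal (real (D 1) / T + real m * ((T + (\<Sum>v\<in>{1..n}. trunc_sq T (D v))) / n))"
    using swg_inv_init[OF D2 n]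
    by (intro ennreal_leI) (simp add: swg_potential_def real_deg_sum_def swg_init_def)
  finally show ?thesis .
qed

section \<open>Averaging over the degrees\<close>

lemma min_sq_Suc_diff_bounds:
  fixes x T :: real
  assumes x: "0 \<le> x" and T: "0 < T"
  defines "\<Delta> \<equiv> (x + 1) * min 1 ((x + 1) / T) - x * min 1 (x / T)"
  shows "0 \<le> \<Delta>" "\<Delta> \<le> 2" "\<Delta> \<le> (2 * x + 1) / T"
proof -
  consider (below) "x + 1 \<le> T" | (above) "T \<le> x" | (across) "x < T" "T < x + 1" by linarith
  hence "0 \<le> \<Delta> \<and> \<Delta> \<le> 2 \<and> \<Delta> \<le> (2 * x + 1) / T"
  proof cases
    case below
    have "\<Delta> = (2 * x + 1) / T"
      using below T unfolding \<Delta>_def by (simp add: min_def field_simps power2_eq_square)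
    moreover have "(2 * x + 1) / T \<le> 2" using below T by (simp add: field_simps)
    ultimately show ?thesis using x T by simp
  next
    case above
    have "\<Delta> = 1" using above T unfolding \<Delta>_def by (simp add: min_def field_simps)
    moreover have "1 \<le> (2 * x + 1) / T" using above T x by (simp add: field_simps)
    ultimately show ?thesis by simp
  next
    case across
    have \<Delta>: "\<Delta> = (x + 1) - x * (x / T)" using across T unfolding \<Delta>_def by (simp add: min_def field_simps)
    have "x * x \<le> T * x" using across x by (intro mult_right_mono) auto
    hence "x * (x / T) \<le> x" using T by (simp add: field_simps)
    moreover have "(x + 1) - x * (x / T) \<le> (2 * x + 1) / T"
    proof -
      have "(x + 1) * T \<le> (x + 1) * (x + 1)" using across x by (intro mult_left_mono) auto
      hence "(x + 1) * T - x * x \<le> 2 * x + 1" by (simp add: algebra_simps)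
      moreover have "(x + 1) - x * (x / T) = ((x + 1) * T - x * x) / T" using T by (simp add: field_simps)
      ultimately show ?thesis using T by (simp add: divide_right_mono)
    qed
    moreover have "(x + 1) - x * (x / T) \<le> 2"
    proof -
      have "x * (x / (x + 1)) \<le> x * (x / T)" using across x T by (intro mult_left_mono divide_left_mono) auto
      moreover have "(x + 1) - x * (x / (x + 1)) \<le> 2" using x by (simp add: field_simps)
      ultimately show ?thesis by linarith
    qed
    ultimately show ?thesis unfolding \<Delta> by simp
  qed
  thus "0 \<le> \<Delta>" "\<Delta> \<le> 2" "\<Delta> \<le> (2 * x + 1) / T" by auto
qed

lemma trunc_sq_Suc_diff_bounds:
  assumes "0 < T"
  shows "0 \<le> trunc_sq T (Suc d) - trunc_sq T d"
    and "trunc_sq T (Suc d) - trunc_sq T d \<le> 2"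
    and "trunc_sq T (Suc d) - trunc_sq T d \<le> (2 * real d + 1) / T"
  using min_sq_Suc_diff_bounds[of "real d" T] assms unfolding trunc_sq_def by (auto simp: add.commute)

lemma trunc_sq_le_Suc: "0 < T \<Longrightarrow> trunc_sq T d \<le> trunc_sq T (Suc d)"
  using trunc_sq_Suc_diff_bounds(1)[of T d] by simp

lemma trunc_sq_mono: "0 < T \<Longrightarrow> a \<le> b \<Longrightarrow> trunc_sq T a \<le> trunc_sq T b"
  by (induction b) (auto simp: le_Suc_eq intro: order_trans trunc_sq_le_Suc)

lemma fix_parity_ge: "D v \<le> fix_parity n D v"
  unfolding fix_parity_def by auto

lemma fix_parity_le: "fix_parity n D v \<le> D v + (if v = n then 1 else 0)"
  unfolding fix_parity_def by auto

lemma sum_trunc_sq_fix_parity_le: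
  assumes T: "0 < T" and n: "1 \<le> n"
  shows "(\<Sum>v\<in>{1..n}. trunc_sq T (fix_parity n D v)) \<le> (\<Sum>v\<in>{1..n}. trunc_sq T (D v)) + 2"
proof -
  have "trunc_sq T (fix_parity n D v) \<le> trunc_sq T (D v) + (if v = n then 2 else 0)" for v
  proof (cases "v = n")
    case True
    have "trunc_sq T (fix_parity n D v) \<le> trunc_sq T (Suc (D v))"
      using fix_parity_le[of n D v] True by (intro trunc_sq_mono T) auto
    thus ?thesis using trunc_sq_Suc_diff_bounds(2)[OF T, of "D v"] True by simp
  qed (simp add: fix_parity_def)
  hence "(\<Sum>v\<in>{1..n}. trunc_sq T (fix_parity n D v))
      \<le> (\<Sum>v\<in>{1..n}. trunc_sq T (D v) + (if v = n then 2 else 0))"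
    by (intro sum_mono)
  also have "\<dots> = (\<Sum>v\<in>{1..n}. trunc_sq T (D v)) + 2" using n by (simp add: sum.distrib)
  finally show ?thesis .
qed

lemma prob_R_gt_fix_parity_le:
  assumes D2: "\<forall>v\<in>{1..n}. 2 \<le> D v" and T: "0 < T" and m: "2 * m \<le> n" and n: "1 \<le> n"
  shows "emeasure (swg_path n (fix_parity n D) m) {xs. R_gt m xs}
       \<le> ennreal ((real (D 1) + 1) / T + real m * (T + 2 + (\<Sum>v\<in>{1..n}. trunc_sq T (D v))) / n)"
proof -
  define D' where "D' = fix_parity n D"
  have D'2: "\<forall>v\<in>{1..n}. 2 \<le> D' v" using D2 fix_parity_ge[of D _ n] unfolding D'_def by (meson order_trans)
  have "real (D' 1) / T \<le> (real (D 1) + 1) / T"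
    using fix_parity_le[of n D 1] T unfolding D'_def by (intro divide_right_mono) (auto split: if_splits)
  moreover have "real m * ((T + (\<Sum>v\<in>{1..n}. trunc_sq T (D' v))) / n)
      \<le> real m * (T + 2 + (\<Sum>v\<in>{1..n}. trunc_sq T (D v))) / n"
    using sum_trunc_sq_fix_parity_le[OF T n, of D] unfolding D'_def
    by (simp add: divide_right_mono mult_left_mono)
  ultimately show ?thesis
    using prob_R_gt_swg_path_le[OF D'2 T m n] unfolding D'_def
    by (smt (verit, ccfv_SIG) ennreal_leI order_trans)
qed

lemma nn_integral_Pi_pmf_component:
  assumes "v \<in> A" "finite A"
  shows "(\<integral>\<^sup>+D. f (D v) \<partial>measure_pmf (Pi_pmf A dflt p)) = (\<integral>\<^sup>+d. f d \<partial>measure_pmf (p v))"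
proof -
  have "map_pmf (\<lambda>D. D v) (Pi_pmf A dflt p) = p v" using Pi_pmf_component[OF assms(2), of v dflt p] assms(1) by simp
  thus ?thesis by (metis nn_integral_map_pmf)
qed

lemma nn_integral_iid_degrees_le:
  fixes a b c T M G :: real and n :: nat
  assumes n: "1 \<le> n" and a: "0 \<le> a" and b: "0 \<le> b" and c: "0 \<le> c" and T: "0 < T"
    and mean: "(\<integral>\<^sup>+d. real d \<partial>measure_pmf p) \<le> ennreal M"
    and trunc: "(\<integral>\<^sup>+d. trunc_sq T d \<partial>measure_pmf p) \<le> ennreal G"
    and M: "0 \<le> M" and G: "0 \<le> G"
  shows "(\<integral>\<^sup>+D. ennreal (a * real (D 1) + c + b * (\<Sum>v\<in>{1..n}. trunc_sq T (D v)))
           \<partial>measure_pmf (Pi_pmf {1..n} 0 (\<lambda>_. p)))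
       \<le> ennreal (a * M + c + b * n * G)"
proof -
  define P where "P = Pi_pmf {1..n} 0 (\<lambda>_. p)"
  have "(\<integral>\<^sup>+D. ennreal (a * real (D 1) + c + b * (\<Sum>v\<in>{1..n}. trunc_sq T (D v))) \<partial>measure_pmf P)
      = (\<integral>\<^sup>+D. ennreal a * real (D 1) + ennreal c
          + ennreal b * (\<Sum>v\<in>{1..n}. ennreal (trunc_sq T (D v))) \<partial>measure_pmf P)"
  proof (rule nn_integral_cong)
    fix D :: "nat \<Rightarrow> nat"
    have "(\<Sum>v\<in>{1..n}. ennreal (trunc_sq T (D v))) = ennreal (\<Sum>v\<in>{1..n}. trunc_sq T (D v))"
      using trunc_sq_nonneg[OF T] by simp
    thus "ennreal (a * real (D 1) + c + b * (\<Sum>v\<in>{1..n}. trunc_sq T (D v)))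
        = ennreal a * real (D 1) + ennreal c + ennreal b * (\<Sum>v\<in>{1..n}. ennreal (trunc_sq T (D v)))"
      using a b c trunc_sq_nonneg[OF T]
      by (simp add: ennreal_mult[symmetric] ennreal_plus[symmetric] sum_nonneg del: ennreal_plus)
  qed
  also have "\<dots> = ennreal a * (\<integral>\<^sup>+D. real (D 1) \<partial>measure_pmf P) + ennreal c
      + ennreal b * (\<Sum>v\<in>{1..n}. \<integral>\<^sup>+D. trunc_sq T (D v) \<partial>measure_pmf P)"
    by (simp add: nn_integral_add nn_integral_cmult nn_integral_sum)
  also have "\<dots> = ennreal a * (\<integral>\<^sup>+d. real d \<partial>measure_pmf p) + ennreal c
      + ennreal b * (\<Sum>v\<in>{1..n}. \<integral>\<^sup>+d. trunc_sq T d \<partial>measure_pmf p)"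
  proof -
    have "(\<integral>\<^sup>+D. real (D 1) \<partial>measure_pmf P) = (\<integral>\<^sup>+d. real d \<partial>measure_pmf p)"
      unfolding P_def using n by (intro nn_integral_Pi_pmf_component[where f="\<lambda>d. ennreal (real d)"]) auto
    moreover have "(\<Sum>v\<in>{1..n}. \<integral>\<^sup>+D. trunc_sq T (D v) \<partial>measure_pmf P)
        = (\<Sum>v\<in>{1..n}. \<integral>\<^sup>+d. trunc_sq T d \<partial>measure_pmf p)"
      unfolding P_def
      by (intro sum.cong refl nn_integral_Pi_pmf_component[where f="\<lambda>d. ennreal (trunc_sq T d)"]) auto
    ultimately show ?thesis by simp
  qed
  also have "\<dots> \<le> ennreal a * ennreal M + ennreal c + ennreal b * (\<Sum>v\<in>{1..n}. ennreal G)"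
    using mean trunc by (intro add_mono mult_left_mono sum_mono order_refl) auto
  also have "\<dots> = ennreal (a * M + c + b * n * G)"
    using a b c M G
    by (simp add: ennreal_mult[symmetric] ennreal_plus[symmetric] ennreal_of_nat_eq_real_of_nat del: ennreal_plus)
  finally show ?thesis unfolding P_def .
qed

lemma prob_R_gt_cm_swg_le:
  assumes deg2: "set_pmf p \<subseteq> {2..}" and T: "0 < T" and m: "2 * m \<le> n" and n: "1 \<le> n"
    and mean: "(\<integral>\<^sup>+d. real d \<partial>measure_pmf p) \<le> ennreal M"
    and trunc: "(\<integral>\<^sup>+d. trunc_sq T d \<partial>measure_pmf p) \<le> ennreal G"
    and M: "0 \<le> M" and G: "0 \<le> G"
  shows "measure_pmf.prob (cm_swg p n m) {xs. R_gt m xs} \<le> (M + 1) / T + m * (T + 2) / n + m * G"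
proof -
  define c where "c = 1 / T + m * (T + 2) / n"
  have c: "0 \<le> c" unfolding c_def using T by simp
  define F where "F D = 1 / T * real (D 1) + c + m / n * (\<Sum>v\<in>{1..n}. trunc_sq T (D v))"
    for D :: "nat \<Rightarrow> nat"
  have "emeasure (cm_swg p n m) {xs. R_gt m xs}
      = (\<integral>\<^sup>+D. emeasure (swg_path n (fix_parity n D) m) {xs. R_gt m xs} \<partial>measure_pmf (Pi_pmf {1..n} 0 (\<lambda>_. p)))"
    unfolding cm_swg_def degrees_def by simp
  also have "\<dots> \<le> (\<integral>\<^sup>+D. F D \<partial>measure_pmf (Pi_pmf {1..n} 0 (\<lambda>_. p)))"
  proof (intro nn_integral_mono_AE, unfold AE_measure_pmf_iff, intro ballI)
    fix D assume "D \<in> set_pmf (Pi_pmf {1..n} 0 (\<lambda>_. p))"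
    hence "\<forall>v\<in>{1..n}. 2 \<le> D v" using deg2 by (auto simp: set_Pi_pmf PiE_dflt_def)
    moreover have "(real (D 1) + 1) / T + real m * (T + 2 + (\<Sum>v\<in>{1..n}. trunc_sq T (D v))) / n = F D"
      unfolding F_def c_def using n T by (simp add: field_simps)
    ultimately show "emeasure (swg_path n (fix_parity n D) m) {xs. R_gt m xs} \<le> F D"
      using prob_R_gt_fix_parity_le[OF _ T m n] by metis
  qed
  also have "\<dots> \<le> ennreal (1 / T * M + c + m / n * n * G)"
    unfolding F_def using n c T by (intro nn_integral_iid_degrees_le mean trunc M G) auto
  finally have "ennreal (measure_pmf.prob (cm_swg p n m) {xs. R_gt m xs}) \<le> ennreal (M / T + c + m * G)"
    using n by (simp add: measure_pmf.emeasure_eq_measure)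
  hence "measure_pmf.prob (cm_swg p n m) {xs. R_gt m xs} \<le> M / T + c + m * G"
    using T M c G by (subst (asm) ennreal_le_iff) auto
  thus ?thesis unfolding c_def by (simp add: add_divide_distrib)
qed

section \<open>Moments of a power-law degree distribution\<close>

lemma sum_atLeastAtMost_if_le:
  fixes g h :: "nat \<Rightarrow> real"
  assumes "\<And>j. 0 \<le> g j" "\<And>j. 0 \<le> h j"
  shows "(\<Sum>j=1..K. if j \<le> N then g j else h j) \<le> (\<Sum>j=1..N. g j) + (\<Sum>j\<in>{N<..K}. h j)"
  unfolding sum.If_cases[OF finite_atLeastAtMost]
  by (intro add_mono sum_mono2) (use assms in auto)

lemma trunc_sq_increment_tail_le:
  fixes c \<tau> T :: real
  assumes tail: "measure_pmf.prob p {d. j < d} \<le> c * real j powr (-(\<tau> - 1))"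
    and c: "0 \<le> c" and T: "0 < T" and j: "1 \<le> j"
  shows "(trunc_sq T (Suc j) - trunc_sq T j) * measure_pmf.prob p {d. j < d} \<le> 3 * c / T * real j powr (2 - \<tau>)"
    and "(trunc_sq T (Suc j) - trunc_sq T j) * measure_pmf.prob p {d. j < d} \<le> 2 * c * real j powr (-(\<tau> - 1))"
proof -
  note \<Delta> = trunc_sq_Suc_diff_bounds[OF T, of j]
  have "trunc_sq T (Suc j) - trunc_sq T j \<le> 3 * real j / T"
    using \<Delta>(3) j T by (smt (verit) divide_right_mono of_nat_1 of_nat_mono)
  hence "(trunc_sq T (Suc j) - trunc_sq T j) * measure_pmf.prob p {d. j < d}
      \<le> (3 * real j / T) * (c * real j powr (-(\<tau> - 1)))"
    using \<Delta>(1) tail T c by (intro mult_mono) auto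
  also have "\<dots> = 3 * c / T * (real j * real j powr (-(\<tau> - 1)))" by (simp add: field_simps)
  also have "real j * real j powr (-(\<tau> - 1)) = real j powr (2 - \<tau>)" by (simp add: powr_mult_base)
  finally show "(trunc_sq T (Suc j) - trunc_sq T j) * measure_pmf.prob p {d. j < d}
      \<le> 3 * c / T * real j powr (2 - \<tau>)" .
  have "(trunc_sq T (Suc j) - trunc_sq T j) * measure_pmf.prob p {d. j < d}
      \<le> 2 * (c * real j powr (-(\<tau> - 1)))"
    using \<Delta>(1,2) tail by (intro mult_mono) auto
  thus "(trunc_sq T (Suc j) - trunc_sq T j) * measure_pmf.prob p {d. j < d} \<le> 2 * c * real j powr (-(\<tau> - 1))"
    by simp
qed

lemma nn_integral_real_le_of_tail:
  fixes c \<tau> :: real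
  assumes tail: "\<And>j. 1 \<le> j \<Longrightarrow> measure_pmf.prob p {d. j < d} \<le> c * real j powr (-(\<tau> - 1))"
    and c: "0 < c" and \<tau>: "2 < \<tau>"
  shows "(\<integral>\<^sup>+d. real d \<partial>measure_pmf p) \<le> ennreal (1 + c * (1 + 1 / (\<tau> - 2)))"
proof (rule nn_integral_pmf_nat_le_of_increments[where f="\<lambda>j. c * real j powr (-(\<tau> - 2) - 1)"])
  show "(real (Suc j) - real j) * measure_pmf.prob p {d. j < d} \<le> c * real j powr (-(\<tau> - 2) - 1)"
    if "1 \<le> j" for j
    using tail[OF that] by (simp add: algebra_simps)
  show "(\<Sum>j=1..K. c * real j powr (-(\<tau> - 2) - 1)) \<le> c * (1 + 1 / (\<tau> - 2))" for K
    unfolding sum_distrib_left[symmetric] by (intro mult_left_mono sum_powr_neg_le) (use \<tau> c in auto)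
qed auto

lemma nn_integral_trunc_sq_le_light_tail:
  fixes c \<tau> T :: real
  assumes tail: "\<And>j. 1 \<le> j \<Longrightarrow> measure_pmf.prob p {d. j < d} \<le> c * real j powr (-(\<tau> - 1))"
    and c: "0 < c" and \<tau>: "3 < \<tau>" and T: "0 < T"
  shows "(\<integral>\<^sup>+d. trunc_sq T d \<partial>measure_pmf p) \<le> ennreal ((1 + 3 * c * (1 + 1 / (\<tau> - 3))) * T powr (- 1))"
proof -
  have "(\<integral>\<^sup>+d. trunc_sq T d \<partial>measure_pmf p) \<le> ennreal (1 / T + 3 * c / T * (1 + 1 / (\<tau> - 3)))"
  proof (rule nn_integral_pmf_nat_le_of_increments[where f="\<lambda>j. 3 * c / T * real j powr (-(\<tau> - 3) - 1)"])
    show "(trunc_sq T (Suc j) - trunc_sq T j) * measure_pmf.prob p {d. j < d}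
        \<le> 3 * c / T * real j powr (-(\<tau> - 3) - 1)" if "1 \<le> j" for j
      using trunc_sq_increment_tail_le(1)[OF tail[OF that] _ T that] c by simp
    show "(\<Sum>j=1..K. 3 * c / T * real j powr (-(\<tau> - 3) - 1)) \<le> 3 * c / T * (1 + 1 / (\<tau> - 3))" for K
      unfolding sum_distrib_left[symmetric] by (intro mult_left_mono sum_powr_neg_le) (use \<tau> c T in auto)
    show "trunc_sq T j \<le> trunc_sq T (Suc j)" for j using T by (rule trunc_sq_le_Suc)
    show "trunc_sq T 0 = 0" "trunc_sq T 1 \<le> 1 / T" using T by (auto simp: trunc_sq_def)
  qed
  also have "1 / T + 3 * c / T * (1 + 1 / (\<tau> - 3)) = (1 + 3 * c * (1 + 1 / (\<tau> - 3))) * T powr (- 1)"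
    using T by (simp add: powr_minus_divide field_simps)
  finally show ?thesis .
qed

lemma powr_neg_le_of_ge_half:
  fixes N T b :: real
  assumes N: "0 < N" "N \<le> T" "T \<le> 2 * N" and b: "0 \<le> b" "b \<le> 1"
  shows "N powr (- b) \<le> 2 * T powr (- b)"
proof -
  have "N powr (- b) \<le> (T / 2) powr (- b)" by (rule powr_mono2') (use N b in auto)
  also have "\<dots> = T powr (- b) / 2 powr (- b)" by (rule powr_divide)
  also have "\<dots> = T powr (- b) * 2 powr b" by (simp add: powr_minus divide_inverse_commute)
  also have "2 powr b \<le> (2::real) powr 1" by (rule powr_mono) (use b in auto)
  hence "T powr (- b) * 2 powr b \<le> T powr (- b) * 2" by (intro mult_left_mono) auto
  finally show ?thesis by simp
qed

lemma heavy_tail_terms_le: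
  fixes T c \<tau> :: real and N :: nat
  assumes T: "1 \<le> T" and c: "0 < c" and \<tau>: "2 < \<tau>" "\<tau> < 3"
    and N: "1 \<le> N" "real N \<le> T" "T \<le> 2 * real N"
  shows "1 / T + (3 * c / T * (1 + real N powr (3 - \<tau>) / (3 - \<tau>)) + 2 * c * (real N powr (- (\<tau> - 2)) / (\<tau> - 2)))
     \<le> (1 + 3 * c + 3 * c / (3 - \<tau>) + 4 * c / (\<tau> - 2)) * T powr (- (\<tau> - 2))"
proof -
  define P where "P = T powr (- (\<tau> - 2))"
  have inv_T: "1 / T \<le> P"
  proof -
    have "1 / T = T powr (- 1)" using T by (simp add: powr_minus_divide)
    also have "\<dots> \<le> P" unfolding P_def by (rule powr_mono) (use T \<tau> in auto)
    finally show ?thesis .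
  qed
  have head: "3 * c / T * (real N powr (3 - \<tau>) / (3 - \<tau>)) \<le> 3 * c / (3 - \<tau>) * P"
  proof -
    have "real N powr (3 - \<tau>) \<le> T powr (3 - \<tau>)" by (rule powr_mono2) (use N \<tau> in auto)
    hence "3 * c / T * (real N powr (3 - \<tau>) / (3 - \<tau>)) \<le> 3 * c / T * (T powr (3 - \<tau>) / (3 - \<tau>))"
      using c T \<tau> by (intro mult_left_mono divide_right_mono) auto
    also have "\<dots> = 3 * c / (3 - \<tau>) * (T powr (3 - \<tau>) / T powr 1)"
      using T by (simp add: divide_inverse mult_ac)
    also have "T powr (3 - \<tau>) / T powr 1 = P" unfolding P_def powr_diff[symmetric] by (simp add: algebra_simps)
    finally show ?thesis .
  qed
  have "real N powr (- (\<tau> - 2)) \<le> 2 * P"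
    unfolding P_def by (rule powr_neg_le_of_ge_half) (use N \<tau> in auto)
  hence "2 * c * (real N powr (- (\<tau> - 2)) / (\<tau> - 2)) \<le> 2 * c * (2 * P / (\<tau> - 2))"
    using c \<tau> by (intro mult_left_mono divide_right_mono) auto
  hence tail: "2 * c * (real N powr (- (\<tau> - 2)) / (\<tau> - 2)) \<le> 4 * c / (\<tau> - 2) * P"
    by (simp add: field_simps)
  have "3 * c / T \<le> 3 * c * P" using inv_T c by (simp add: mult_left_mono divide_inverse)
  hence "1 / T + (3 * c / T * (1 + real N powr (3 - \<tau>) / (3 - \<tau>)) + 2 * c * (real N powr (- (\<tau> - 2)) / (\<tau> - 2)))
      \<le> P + 3 * c * P + 3 * c / (3 - \<tau>) * P + 4 * c / (\<tau> - 2) * P"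
    using inv_T head tail by (simp add: ring_distribs)
  also have "\<dots> = (1 + 3 * c + 3 * c / (3 - \<tau>) + 4 * c / (\<tau> - 2)) * T powr (- (\<tau> - 2))"
    unfolding P_def by (simp add: ring_distribs)
  finally show ?thesis .
qed

lemma nn_integral_trunc_sq_le_heavy_tail:
  fixes c \<tau> T :: real
  assumes tail: "\<And>j. 1 \<le> j \<Longrightarrow> measure_pmf.prob p {d. j < d} \<le> c * real j powr (-(\<tau> - 1))"
    and c: "0 < c" and \<tau>: "2 < \<tau>" "\<tau> < 3" and T: "1 \<le> T"
  shows "(\<integral>\<^sup>+d. trunc_sq T d \<partial>measure_pmf p)
       \<le> ennreal ((1 + 3 * c + 3 * c / (3 - \<tau>) + 4 * c / (\<tau> - 2)) * T powr (- (\<tau> - 2)))"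
proof -
  define N where "N = nat \<lfloor>T\<rfloor>"
  have N: "1 \<le> N" "real N \<le> T" unfolding N_def using T by linarith+
  have "T \<le> 2 * real N"
  proof -
    have "T < real_of_int \<lfloor>T\<rfloor> + 1" "1 \<le> \<lfloor>T\<rfloor>" using T by linarith+
    moreover have "real N = real_of_int \<lfloor>T\<rfloor>" unfolding N_def using T by simp
    ultimately show ?thesis by linarith
  qed
  note N = N this
  have "(\<integral>\<^sup>+d. trunc_sq T d \<partial>measure_pmf p)
      \<le> ennreal (1 / T + (3 * c / T * (1 + real N powr (3 - \<tau>) / (3 - \<tau>))
                          + 2 * c * (real N powr (- (\<tau> - 2)) / (\<tau> - 2))))"
  proof (rule nn_integral_pmf_nat_le_of_increments[where
        f="\<lambda>j. if j \<le> N then 3 * c / T * real j powr ((3 - \<tau>) - 1) else 2 * c * real j powr (- (\<tau> - 2) - 1)"])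
    show "(trunc_sq T (Suc j) - trunc_sq T j) * measure_pmf.prob p {d. j < d}
        \<le> (if j \<le> N then 3 * c / T * real j powr ((3 - \<tau>) - 1) else 2 * c * real j powr (- (\<tau> - 2) - 1))"
      if "1 \<le> j" for j
      using trunc_sq_increment_tail_le[OF tail[OF that] _ _ that] c T by simp
    show "(\<Sum>j=1..K. if j \<le> N then 3 * c / T * real j powr ((3 - \<tau>) - 1) else 2 * c * real j powr (- (\<tau> - 2) - 1))
        \<le> 3 * c / T * (1 + real N powr (3 - \<tau>) / (3 - \<tau>)) + 2 * c * (real N powr (- (\<tau> - 2)) / (\<tau> - 2))"
      for K
    proof -
      have head: "(\<Sum>j=1..N. real j powr ((3 - \<tau>) - 1)) \<le> 1 + real N powr (3 - \<tau>) / (3 - \<tau>)"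
        using \<tau> by (intro sum_powr_le) auto
      have tail: "(\<Sum>j\<in>{N<..K}. real j powr (- (\<tau> - 2) - 1)) \<le> real N powr (- (\<tau> - 2)) / (\<tau> - 2)"
        using \<tau> N by (intro sum_powr_tail_le) auto
      have "(\<Sum>j=1..K. if j \<le> N then 3 * c / T * real j powr ((3 - \<tau>) - 1) else 2 * c * real j powr (- (\<tau> - 2) - 1))
          \<le> (\<Sum>j=1..N. 3 * c / T * real j powr ((3 - \<tau>) - 1)) + (\<Sum>j\<in>{N<..K}. 2 * c * real j powr (- (\<tau> - 2) - 1))"
        by (rule sum_atLeastAtMost_if_le) (use c T in auto)
      also have "\<dots> = 3 * c / T * (\<Sum>j=1..N. real j powr ((3 - \<tau>) - 1)) + 2 * c * (\<Sum>j\<in>{N<..K}. real j powr (- (\<tau> - 2) - 1))"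
        by (simp add: sum_distrib_left)
      also have "\<dots> \<le> 3 * c / T * (1 + real N powr (3 - \<tau>) / (3 - \<tau>)) + 2 * c * (real N powr (- (\<tau> - 2)) / (\<tau> - 2))"
        using head tail c T by (intro add_mono mult_left_mono) auto
      finally show ?thesis .
    qed
    show "trunc_sq T j \<le> trunc_sq T (Suc j)" for j using T by (intro trunc_sq_le_Suc) simp
    show "trunc_sq T 0 = 0" "trunc_sq T 1 \<le> 1 / T" using T by (auto simp: trunc_sq_def)
  qed
  also have "\<dots> \<le> ennreal ((1 + 3 * c + 3 * c / (3 - \<tau>) + 4 * c / (\<tau> - 2)) * T powr (- (\<tau> - 2)))"
    by (intro ennreal_leI heavy_tail_terms_le T c \<tau> N)
  finally show ?thesis .
qed

text \<open>With \<open>T = n^(1-\<alpha>)\<close> and \<open>(1 - \<alpha>) \<beta> = \<alpha>\<close> one has \<open>T^-\<beta> = n^-\<alpha> = T / n\<close>, which balances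
  the collision term \<open>m T / n\<close> against the new-vertex term \<open>m E[D min 1 (D / T)]\<close>.\<close>
lemma prob_R_gt_cm_swg_le_powr:
  fixes \<alpha> \<beta> M K :: real
  assumes deg2: "set_pmf p \<subseteq> {2..}" and \<alpha>: "0 < \<alpha>" "\<alpha> < 1" "(1 - \<alpha>) * \<beta> = \<alpha>"
    and mean: "(\<integral>\<^sup>+d. real d \<partial>measure_pmf p) \<le> ennreal M" and M: "0 \<le> M"
    and trunc: "\<And>T. 1 \<le> T \<Longrightarrow> (\<integral>\<^sup>+d. trunc_sq T d \<partial>measure_pmf p) \<le> ennreal (K * T powr (- \<beta>))"
    and K: "0 \<le> K" and n: "1 \<le> n" and m: "real m / real n powr \<alpha> < 1 / 4"
  shows "measure_pmf.prob (cm_swg p n m) {xs. R_gt m xs}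
       \<le> (M + 1) * real n powr (\<alpha> - 1) + (3 + K) * (real m / real n powr \<alpha>)"
proof -
  define a T where "a = real n powr \<alpha>" and "T = real n powr (1 - \<alpha>)"
  have a: "0 < a" "a \<le> real n"
  proof -
    show "0 < a" unfolding a_def using n by simp
    have "a \<le> real n powr 1" unfolding a_def by (rule powr_mono) (use \<alpha> n in auto)
    thus "a \<le> real n" using n by simp
  qed
  have T: "1 \<le> T" unfolding T_def using \<alpha> n by (simp add: ge_one_powr_ge_zero)
  have inv_T: "1 / T = real n powr (\<alpha> - 1)" unfolding T_def by (simp add: powr_minus_divide[symmetric])
  have T_over_n: "T / real n = 1 / a"
  proof -
    have "T / real n = real n powr (1 - \<alpha>) / real n powr 1" unfolding T_def using n by simp
    also have "\<dots> = real n powr (- \<alpha>)" unfolding powr_diff[symmetric] by simp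
    finally show ?thesis unfolding a_def by (simp add: powr_minus_divide)
  qed
  have T_pow: "T powr (- \<beta>) = 1 / a"
    unfolding T_def a_def using \<alpha>(3) by (simp add: powr_powr powr_minus_divide[symmetric])
  have "real m < 1 / 4 * a" using m a(1) unfolding a_def[symmetric] by (simp add: pos_divide_less_eq)
  hence "real (2 * m) \<le> real n" using a by simp
  hence "2 * m \<le> n" by (simp only: of_nat_le_iff)
  hence "measure_pmf.prob (cm_swg p n m) {xs. R_gt m xs}
      \<le> (M + 1) / T + m * (T + 2) / n + m * (K * T powr (- \<beta>))"
    using T K by (intro prob_R_gt_cm_swg_le[OF deg2 _ _ n mean trunc[OF T] M]) auto
  also have "\<dots> = (M + 1) * (1 / T) + m * (T / n) + 2 * m / n + K * (m / a)"
    unfolding T_pow using n by (simp add: field_simps)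
  also have "2 * m / n \<le> 2 * (m / a)" using a by (simp add: frac_le)
  finally show ?thesis unfolding inv_T T_over_n a_def by (simp add: algebra_simps add_divide_distrib)
qed

lemma prob_R_gt_cm_swg_tendsto_0:
  fixes \<beta> M K :: real and m :: "nat \<Rightarrow> nat"
  assumes deg2: "set_pmf p \<subseteq> {2..}" and \<beta>: "0 < \<beta>"
    and mean: "(\<integral>\<^sup>+d. real d \<partial>measure_pmf p) \<le> ennreal M" and M: "0 \<le> M"
    and trunc: "\<And>T. 1 \<le> T \<Longrightarrow> (\<integral>\<^sup>+d. trunc_sq T d \<partial>measure_pmf p) \<le> ennreal (K * T powr (- \<beta>))"
    and K: "0 \<le> K"
    and m_small: "(\<lambda>n. real (m n) / real n powr (\<beta> / (\<beta> + 1))) \<longlonglongrightarrow> 0"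
  shows "(\<lambda>n. measure_pmf.prob (cm_swg p n (m n)) {xs. R_gt (m n) xs}) \<longlonglongrightarrow> 0"
proof -
  define \<alpha> where "\<alpha> = \<beta> / (\<beta> + 1)"
  have \<alpha>: "0 < \<alpha>" "\<alpha> < 1" "(1 - \<alpha>) * \<beta> = \<alpha>" unfolding \<alpha>_def using \<beta> by (auto simp: field_simps)
  define bound where "bound n = (M + 1) * real n powr (\<alpha> - 1) + (3 + K) * (real (m n) / real n powr \<alpha>)" for n
  have "(\<lambda>n. real n powr (\<alpha> - 1)) \<longlonglongrightarrow> 0"
    by (rule tendsto_neg_powr) (use \<alpha> filterlim_real_sequentially in auto)
  moreover have m_small': "(\<lambda>n. real (m n) / real n powr \<alpha>) \<longlonglongrightarrow> 0" using m_small unfolding \<alpha>_def .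
  ultimately have bound_lim: "bound \<longlonglongrightarrow> 0"
    unfolding bound_def by (rule tendsto_add_zero[OF tendsto_mult_right_zero tendsto_mult_right_zero])
  have "\<forall>\<^sub>F n in sequentially. real (m n) / real n powr \<alpha> < 1 / 4"
    using m_small' by (rule order_tendstoD) simp
  hence bounded: "\<forall>\<^sub>F n in sequentially. measure_pmf.prob (cm_swg p n (m n)) {xs. R_gt (m n) xs} \<le> bound n"
    using eventually_ge_at_top[of 1] unfolding bound_def
    by eventually_elim (rule prob_R_gt_cm_swg_le_powr[OF deg2 \<alpha> mean M trunc K]; simp)
  show ?thesis by (rule tendsto_sandwich[OF _ bounded _ bound_lim]) auto
qed

lemma set_pmf_ge_2_if_deg_cdf:
  assumes "\<forall>x<2. deg_cdf p x = 0"
  shows "set_pmf p \<subseteq> {2..}"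
proof
  fix k assume k: "k \<in> set_pmf p"
  have "deg_cdf p (3 / 2) = 0" using assms by simp
  hence "set_pmf p \<inter> {k. real k \<le> 3 / 2} = {}" unfolding deg_cdf_def by (simp add: measure_pmf_zero_iff)
  thus "k \<in> {2..}" using k by fastforce
qed

lemma prob_gt_le_if_deg_cdf_tail:
  assumes tail: "\<forall>x>0. 1 - deg_cdf p x \<le> c * x powr (-(\<tau> - 1))" and j: "1 \<le> j"
  shows "measure_pmf.prob p {d. j < d} \<le> c * real j powr (-(\<tau> - 1))"
proof -
  have "{d. j < d} = - {k. k \<le> j}" by auto
  hence "measure_pmf.prob p {d. j < d} = 1 - deg_cdf p (real j)"
    using measure_pmf.prob_compl[of "{k. k \<le> j}" p]
    unfolding deg_cdf_def by (simp add: Compl_eq_Diff_UNIV[symmetric])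
  thus ?thesis using tail j by simp
qed

lemma prob_R_gt_tendsto_0_light_tail:
  fixes c \<tau> :: real
  assumes deg2: "set_pmf p \<subseteq> {2..}" and \<tau>: "3 < \<tau>" and c: "0 < c"
    and tail: "\<forall>x>0. 1 - deg_cdf p x \<le> c * x powr (-(\<tau> - 1))"
    and m_small: "(\<lambda>n. real (m n) / real n powr (1/2)) \<longlonglongrightarrow> 0"
  shows "(\<lambda>n. measure_pmf.prob (cm_swg p n (m n)) {xs. R_gt (m n) xs}) \<longlonglongrightarrow> 0"
proof (rule prob_R_gt_cm_swg_tendsto_0[OF deg2, where \<beta>=1])
  note tail = prob_gt_le_if_deg_cdf_tail[OF tail]
  show "(\<integral>\<^sup>+d. real d \<partial>measure_pmf p) \<le> ennreal (1 + c * (1 + 1 / (\<tau> - 2)))"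
    using \<tau> by (intro nn_integral_real_le_of_tail[OF tail c]) auto
  show "(\<integral>\<^sup>+d. trunc_sq T d \<partial>measure_pmf p) \<le> ennreal ((1 + 3 * c * (1 + 1 / (\<tau> - 3))) * T powr (- 1))"
    if "1 \<le> T" for T
    using that by (intro nn_integral_trunc_sq_le_light_tail[OF tail c \<tau>]) auto
qed (use \<tau> c m_small in auto)

lemma prob_R_gt_tendsto_0_heavy_tail:
  fixes c \<tau> :: real
  assumes deg2: "set_pmf p \<subseteq> {2..}" and \<tau>: "2 < \<tau>" "\<tau> < 3" and c: "0 < c"
    and tail: "\<forall>x>0. 1 - deg_cdf p x \<le> c * x powr (-(\<tau> - 1))"
    and m_small: "(\<lambda>n. real (m n) / real n powr ((\<tau> - 2) / (\<tau> - 1))) \<longlonglongrightarrow> 0"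
  shows "(\<lambda>n. measure_pmf.prob (cm_swg p n (m n)) {xs. R_gt (m n) xs}) \<longlonglongrightarrow> 0"
proof (rule prob_R_gt_cm_swg_tendsto_0[OF deg2, where \<beta>="\<tau> - 2"])
  note tail = prob_gt_le_if_deg_cdf_tail[OF tail]
  show "(\<integral>\<^sup>+d. real d \<partial>measure_pmf p) \<le> ennreal (1 + c * (1 + 1 / (\<tau> - 2)))"
    using \<tau> by (intro nn_integral_real_le_of_tail[OF tail c]) auto
  show "(\<integral>\<^sup>+d. trunc_sq T d \<partial>measure_pmf p)
      \<le> ennreal ((1 + 3 * c + 3 * c / (3 - \<tau>) + 4 * c / (\<tau> - 2)) * T powr (- (\<tau> - 2)))"
    if "1 \<le> T" for T
    using that by (intro nn_integral_trunc_sq_le_heavy_tail[OF tail c \<tau>])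
  show "(\<lambda>n. real (m n) / real n powr ((\<tau> - 2) / (\<tau> - 2 + 1))) \<longlonglongrightarrow> 0"
    using m_small by (simp add: algebra_simps)
qed (use \<tau> c in auto)

theorem lemmaA1:
  fixes p :: "nat pmf" and \<tau> :: real and a :: "nat \<Rightarrow> real" and m :: "nat \<Rightarrow> nat"
  assumes cases:
    "(\<forall>x<2. deg_cdf p x = 0) \<and> nondegenerate (deg_cdf p) \<and>
     ((\<tau> > 3 \<and> (\<exists>c>0. \<forall>x>0. 1 - deg_cdf p x \<le> c * x powr (-(\<tau> - 1)))
        \<and> a = (\<lambda>n. real n powr (1/2)))
    \<or> (2 < \<tau> \<and> \<tau> < 3 \<and>
        (\<exists>c1 c2. 0 < c1 \<and> c1 \<le> c2 \<and>
           (\<forall>x\<ge>1. c1 * x powr (-(\<tau> - 1)) \<le> 1 - deg_cdf p x) \<and>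
           (\<forall>x>0. 1 - deg_cdf p x \<le> c2 * x powr (-(\<tau> - 1))))
        \<and> a = (\<lambda>n. real n powr ((\<tau> - 2) / (\<tau> - 1)))))"
  assumes m_small: "(\<lambda>n. real (m n) / a n) \<longlonglongrightarrow> 0"
  shows "(\<lambda>n. measure_pmf.prob (cm_swg p n (m n)) {xs. R_gt (m n) xs}) \<longlonglongrightarrow> 0"
proof -
  have deg2: "set_pmf p \<subseteq> {2..}" using cases by (intro set_pmf_ge_2_if_deg_cdf) auto
  show ?thesis
    using cases
  proof (elim conjE disjE exE)
    fix c assume "3 < \<tau>" "0 < c" "\<forall>x>0. 1 - deg_cdf p x \<le> c * x powr (-(\<tau> - 1))"
      and "a = (\<lambda>n. real n powr (1/2))"
    thus ?thesis using m_small by (intro prob_R_gt_tendsto_0_light_tail[OF deg2]) auto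
  next
    fix c\<^sub>1 c\<^sub>2 assume "2 < \<tau>" "\<tau> < 3" "0 < c\<^sub>1" "c\<^sub>1 \<le> c\<^sub>2"
      and "\<forall>x>0. 1 - deg_cdf p x \<le> c\<^sub>2 * x powr (-(\<tau> - 1))" "a = (\<lambda>n. real n powr ((\<tau> - 2) / (\<tau> - 1)))"
    thus ?thesis using m_small by (intro prob_R_gt_tendsto_0_heavy_tail[OF deg2]) auto
  qed
qed

end
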